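(* Let $V$ be a poset, $m$ a maximal node of $V$ of positive height, and let $U$ be a splitting of $V$ at $m$ with splitting map $\varphi$. Then $\dim U=\dim V$ and $\varphi(\min U)=\min V$.
   Context: $\dim$ of a poset is the supremum of lengths of chains; the height of a node $u$ is the dimension of $\{v: v\le u\}$. A poset map is an order-preserving map. Given a poset $V$ with a maximal node $m$ of positive height, a poset $U$ is a splitting of $V$ at $m$ if there exist a finite nonempty set $\mathcal M\subseteq\max U$ of nodes of positive height and a surjective poset map $\varphi:U\to V$ (called a splitting map) such that: (1) $\varphi^{-1}(m)=\mathcal M$ and $|\varphi^{-1}(v)|=1$ for all $v\neq m$; (2) whenever $\varphi(x')=x\le y$ with $x'\in U$, $x,y\in V$, there exists $y'\in U$ with $x'\le y'$ and $\varphi(y')=y$. *)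

theory Defs
  imports Main "HOL-Library.Extended_Nat"
begin

text \<open>Posets are modelled as types of class order (the poset is the whole type).\<close>

definition dim_on :: "'a::order set \<Rightarrow> enat" where
  "dim_on S = Sup {enat (card C - 1) | C. C \<subseteq> S \<and> finite C \<and> C \<noteq> {} \<and>
                     Complete_Partial_Order.chain (\<le>) C}"

abbreviation dim :: "'a::order itself \<Rightarrow> enat" where
  "dim _ \<equiv> dim_on (UNIV :: 'a set)"

definition height :: "'a::order \<Rightarrow> enat" where
  "height u = dim_on {v. v \<le> u}"

definition max_nodes :: "'a::order set" where
  "max_nodes = {u. \<forall>y. u \<le> y \<longrightarrow> y = u}"

definition min_nodes :: "'a::order set" where
  "min_nodes = {u. \<forall>y. y \<le> u \<longrightarrow> y = u}"

definition splitting_map :: "('u::order \<Rightarrow> 'v::order) \<Rightarrow> 'v \<Rightarrow> bool" where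
  "splitting_map \<phi> m \<longleftrightarrow>
     (\<exists>M. finite M \<and> M \<noteq> {} \<and> M \<subseteq> max_nodes \<and> (\<forall>x\<in>M. height x > 0) \<and>
          mono \<phi> \<and> surj \<phi> \<and>
          \<phi> -` {m} = M \<and>
          (\<forall>v. v \<noteq> m \<longrightarrow> card (\<phi> -` {v}) = 1) \<and>
          (\<forall>x' y. \<phi> x' \<le> y \<longrightarrow> (\<exists>y'. x' \<le> y' \<and> \<phi> y' = y)))"

end

theory Submission
  imports Defs
begin

text \<open>A splitting map never identifies two comparable nodes: its fibres are singletons except
  over \<open>m\<close>, where they consist of maximal nodes. Hence it maps finite chains injectively onto
  chains. Conversely every finite chain of \<open>V\<close> lifts to a chain of \<open>U\<close>: lift all but its top
  element, then use the lifting property above the top of the lifted part. So both posets have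
  the same chain lengths. For minimal nodes, positive height keeps \<open>m\<close> and its preimages
  out of both \<open>min_nodes\<close>, and away from \<open>m\<close> the map is bijective and has the lifting property.\<close>

lemma finite_chain_has_greatest:
  fixes C :: "'a::order set"
  assumes "finite C" "C \<noteq> {}" "Complete_Partial_Order.chain (\<le>) C"
  obtains c where "c \<in> C" "\<And>x. x \<in> C \<Longrightarrow> x \<le> c"
proof -
  obtain c where c: "c \<in> C" and maximal: "\<forall>b\<in>C. c \<le> b \<longrightarrow> c = b"
    using finite_has_maximal[OF assms(1,2)] by blast
  show ?thesis
  proof (rule that[OF c])
    fix x
    assume "x \<in> C"
    then show "x \<le> c"
      using chainD[OF assms(3) _ c] maximal by blast
  qed
qed

lemma inj_on_chain_if_eq_imp_eq_on_le:
  fixes f :: "'a::order \<Rightarrow> 'b"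
  assumes "\<And>a b. a \<le> b \<Longrightarrow> f a = f b \<Longrightarrow> a = b"
    and "Complete_Partial_Order.chain (\<le>) C"
  shows "inj_on f C"
proof (rule inj_onI)
  fix a b
  assume "a \<in> C" "b \<in> C" "f a = f b"
  then show "a = b"
    using chainD[OF assms(2) \<open>a \<in> C\<close> \<open>b \<in> C\<close>] assms(1)[of a b] assms(1)[of b a] by auto
qed

lemma chain_lift:
  fixes f :: "'a::order \<Rightarrow> 'b::order"
  assumes "surj f" "mono f"
    and lift: "\<And>x y. f x \<le> y \<Longrightarrow> \<exists>y'. x \<le> y' \<and> f y' = y"
    and "finite C" "Complete_Partial_Order.chain (\<le>) C"
  shows "\<exists>D. finite D \<and> Complete_Partial_Order.chain (\<le>) D \<and> f ` D = C"
  using \<open>finite C\<close> \<open>Complete_Partial_Order.chain (\<le>) C\<close>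
proof (induction C rule: finite_psubset_induct)
  case (psubset C)
  show ?case
  proof (cases "C = {}")
    case True
    then show ?thesis
      using chain_empty by blast
  next
    case False
    obtain c where c: "c \<in> C" "\<And>x. x \<in> C \<Longrightarrow> x \<le> c"
      using finite_chain_has_greatest psubset.hyps psubset.prems False by blast
    obtain D where D: "finite D" "Complete_Partial_Order.chain (\<le>) D" "f ` D = C - {c}"
      using psubset.IH[of "C - {c}"] psubset.prems c(1) by (blast intro: chain_subset)
    obtain y where y: "f y = c" "\<And>d. d \<in> D \<Longrightarrow> d \<le> y"
    proof (cases "D = {}")
      case True
      then show thesis
        using that surjD[OF \<open>surj f\<close>] by (metis empty_iff)
    next
      case False
      obtain d where d: "d \<in> D" "\<And>x. x \<in> D \<Longrightarrow> x \<le> d"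
        using finite_chain_has_greatest D(1,2) False by blast
      have "f d \<le> c"
        using c(2) d(1) D(3) by blast
      then obtain y where "d \<le> y" "f y = c"
        using lift by blast
      then show thesis
        using that d(2) order_trans by blast
    qed
    have "Complete_Partial_Order.chain (\<le>) (insert y D)"
      using D(2) y(2) by (auto simp: chain_def)
    moreover have "f ` insert y D = C"
      using D(3) y(1) c(1) by auto
    ultimately show ?thesis
      using D(1) by blast
  qed
qed

lemma dim_on_le_by_chains:
  fixes S :: "'a::order set" and T :: "'b::order set"
  assumes "\<And>C. C \<subseteq> S \<Longrightarrow> finite C \<Longrightarrow> C \<noteq> {} \<Longrightarrow> Complete_Partial_Order.chain (\<le>) C \<Longrightarrow>
      \<exists>D\<subseteq>T. finite D \<and> D \<noteq> {} \<and> Complete_Partial_Order.chain (\<le>) D \<and> card D = card C"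
  shows "dim_on S \<le> dim_on T"
  unfolding dim_on_def
proof (rule Sup_subset_mono, clarify)
  fix C :: "'a set"
  assume "C \<subseteq> S" "finite C" "C \<noteq> {}" "Complete_Partial_Order.chain (\<le>) C"
  from assms[OF this] obtain D where "D \<subseteq> T" "finite D" "D \<noteq> {}"
    "Complete_Partial_Order.chain (\<le>) D" "card D = card C"
    by blast
  then show "\<exists>D. enat (card C - 1) = enat (card D - 1) \<and> D \<subseteq> T \<and> finite D \<and> D \<noteq> {} \<and>
      Complete_Partial_Order.chain (\<le>) D"
    by (intro exI[of _ D]) simp
qed

lemma dim_eq_if_chains_lift:
  fixes f :: "'a::order \<Rightarrow> 'b::order"
  assumes "surj f" "mono f"
    and lift: "\<And>x y. f x \<le> y \<Longrightarrow> \<exists>y'. x \<le> y' \<and> f y' = y"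
    and strict: "\<And>a b. a \<le> b \<Longrightarrow> f a = f b \<Longrightarrow> a = b"
  shows "dim TYPE('a) = dim TYPE('b)"
proof (rule antisym)
  have card_image_chain: "card (f ` C) = card C" if "Complete_Partial_Order.chain (\<le>) C" for C
    using card_image inj_on_chain_if_eq_imp_eq_on_le[of f, OF strict that] by blast
  show "dim TYPE('a) \<le> dim TYPE('b)"
  proof (rule dim_on_le_by_chains)
    fix C :: "'a set"
    assume C: "finite C" "C \<noteq> {}" "Complete_Partial_Order.chain (\<le>) C"
    have "Complete_Partial_Order.chain (\<le>) (f ` C)"
      using C(3) by (rule chain_imageI) (rule monoD[OF \<open>mono f\<close>])
    with C show "\<exists>D\<subseteq>UNIV :: 'b set. finite D \<and> D \<noteq> {} \<and> Complete_Partial_Order.chain (\<le>) D \<and> card D = card C"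
      using card_image_chain[OF C(3)] by (intro exI[of _ "f ` C"]) simp
  qed
  show "dim TYPE('b) \<le> dim TYPE('a)"
  proof (rule dim_on_le_by_chains)
    fix C :: "'b set"
    assume C: "finite C" "C \<noteq> {}" "Complete_Partial_Order.chain (\<le>) C"
    obtain D where D: "finite D" "Complete_Partial_Order.chain (\<le>) D" "f ` D = C"
      using chain_lift[OF assms(1-3) C(1,3)] by blast
    with C show "\<exists>D\<subseteq>UNIV :: 'a set. finite D \<and> D \<noteq> {} \<and> Complete_Partial_Order.chain (\<le>) D \<and> card D = card C"
      using card_image_chain[OF D(2)] by (intro exI[of _ D]) auto
  qed
qed

lemma dim_on_singleton: "dim_on {u} = 0"
proof -
  have "{enat (card C - 1) | C. C \<subseteq> {u} \<and> finite C \<and> C \<noteq> {} \<and>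
      Complete_Partial_Order.chain (\<le>) C} = {0}"
    by (auto simp: subset_singleton_iff zero_enat_def chain_def intro!: exI[of _ "{u}"])
  then show ?thesis
    unfolding dim_on_def by simp
qed

lemma height_min_node:
  assumes "u \<in> min_nodes"
  shows "height u = 0"
proof -
  have "{v. v \<le> u} = {u}"
    using assms by (auto simp: min_nodes_def)
  then show ?thesis
    by (simp add: height_def dim_on_singleton)
qed

lemma splitting_mapD:
  assumes "splitting_map \<phi> m"
  shows "mono \<phi>" "surj \<phi>"
    and "\<And>x y. \<phi> x \<le> y \<Longrightarrow> \<exists>y'. x \<le> y' \<and> \<phi> y' = y"
    and "\<And>u. \<phi> u = m \<Longrightarrow> u \<in> max_nodes \<and> height u > 0"
    and "\<And>a b. \<phi> a \<noteq> m \<Longrightarrow> \<phi> b = \<phi> a \<Longrightarrow> b = a"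
proof -
  obtain M where M: "M \<subseteq> max_nodes" "\<forall>x\<in>M. height x > 0" "\<phi> -` {m} = M"
    and single: "\<forall>v. v \<noteq> m \<longrightarrow> card (\<phi> -` {v}) = 1"
    using assms unfolding splitting_map_def by blast
  show "mono \<phi>" "surj \<phi>" "\<And>x y. \<phi> x \<le> y \<Longrightarrow> \<exists>y'. x \<le> y' \<and> \<phi> y' = y"
    using assms unfolding splitting_map_def by blast+
  show "\<And>u. \<phi> u = m \<Longrightarrow> u \<in> max_nodes \<and> height u > 0"
    using M by blast
  fix a b
  assume "\<phi> a \<noteq> m" "\<phi> b = \<phi> a"
  then obtain z where "\<phi> -` {\<phi> a} = {z}"
    using single card_1_singletonE by metis
  then show "b = a"
    using \<open>\<phi> b = \<phi> a\<close> by (metis singletonD vimage_singleton_eq)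
qed

lemma splitting_map_eq_imp_eq_on_le:
  assumes "splitting_map \<phi> m" "a \<le> b" "\<phi> a = \<phi> b"
  shows "a = b"
proof (cases "\<phi> a = m")
  case True
  then have "a \<in> max_nodes"
    using splitting_mapD(4)[OF assms(1)] by blast
  then show ?thesis
    using assms(2) by (auto simp: max_nodes_def)
next
  case False
  then show ?thesis
    using splitting_mapD(5)[OF assms(1)] assms(3) by metis
qed

lemma splitting_map_image_min_nodes:
  assumes split: "splitting_map \<phi> m" and "m \<notin> min_nodes"
  shows "\<phi> ` min_nodes = min_nodes"
proof (intro equalityI subsetI)
  note surj = splitting_mapD(2)[OF split]
    and lift = splitting_mapD(3)[OF split] and unique = splitting_mapD(5)[OF split]
  fix v
  assume "v \<in> \<phi> ` min_nodes"
  then obtain u where u: "u \<in> min_nodes" "v = \<phi> u"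
    by blast
  have "\<phi> u \<noteq> m"
  proof
    assume "\<phi> u = m"
    then have "height u > 0"
      using splitting_mapD(4)[OF split] by blast
    then show False
      using height_min_node[OF u(1)] by simp
  qed
  have "y = v" if "y \<le> v" for y
  proof -
    obtain w where w: "\<phi> w = y"
      using surjD[OF surj] by metis
    then have "\<phi> w \<le> \<phi> u"
      using that u(2) by simp
    then obtain u' where "w \<le> u'" "\<phi> u' = \<phi> u"
      using lift by blast
    moreover have "u' = u"
      using unique[OF \<open>\<phi> u \<noteq> m\<close>] calculation(2) .
    ultimately have "w = u"
      using u(1) by (auto simp: min_nodes_def)
    then show "y = v"
      using u(2) w by simp
  qed
  then show "v \<in> min_nodes"
    by (simp add: min_nodes_def)
next
  note mono = splitting_mapD(1)[OF split] and surj = splitting_mapD(2)[OF split]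
    and unique = splitting_mapD(5)[OF split]
  fix v :: 'b
  assume v: "v \<in> min_nodes"
  obtain u where u: "\<phi> u = v"
    using surjD[OF surj] by metis
  have "w = u" if "w \<le> u" for w
  proof -
    have "\<phi> w = v"
      using monoD[OF mono that] u v by (simp add: min_nodes_def)
    moreover have "v \<noteq> m"
      using v \<open>m \<notin> min_nodes\<close> by blast
    ultimately show "w = u"
      using unique u by metis
  qed
  then have "u \<in> min_nodes"
    by (simp add: min_nodes_def)
  then show "v \<in> \<phi> ` min_nodes"
    using u by blast
qed

theorem lemma4p4:
  fixes \<phi> :: "'u::order \<Rightarrow> 'v::order" and m :: 'v
  assumes "m \<in> max_nodes" and "height m > 0"
    and "splitting_map \<phi> m"
  shows "dim TYPE('u) = dim TYPE('v) \<and> \<phi> ` min_nodes = min_nodes"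
proof
  show "dim TYPE('u) = dim TYPE('v)"
    using splitting_mapD(2,1,3)[OF assms(3)] splitting_map_eq_imp_eq_on_le[OF assms(3)]
    by (rule dim_eq_if_chains_lift)
  have "m \<notin> min_nodes"
    using height_min_node assms(2) by fastforce
  then show "\<phi> ` min_nodes = min_nodes"
    using splitting_map_image_min_nodes[OF assms(3)] by blast
qed

end
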